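(* Let $s\in\{+1,-1\}$ and $d\ge1$. Let $f\in L^1(\mathbb T^d)$ be real-valued and nonzero, with real-valued Fourier coefficients $\widehat f$ (e.g. $f$ even) and $\widehat f\in\ell^1(\mathbb Z^d)$, such that $\int_{\mathbb T^d}f\,d\lambda\le0$ and $\sum_{m\in\mathbb Z^d}s\widehat f(m)\le0$. Then $$\lambda(\{x\in\mathbb T^d: f(x)<0\})\cdot\#\{m\in\mathbb Z^d: s\widehat f(m)<0\}\ \ge\ \frac1{16}.$$
   Context: $\mathbb T^d=\mathbb R^d/\mathbb Z^d$, identified with $[-\tfrac12,\tfrac12]^d$, with Haar probability measure $\lambda$ (Lebesgue measure on $[-\tfrac12,\tfrac12]^d$). $\widehat f(m)=\int_{\mathbb T^d}f(x)e^{-2\pi i\langle x,m\rangle}d\lambda(x)$ for $m\in\mathbb Z^d$. *)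

theory Defs
  imports "HOL-Analysis.Analysis"
begin

text \<open>The torus T^d = R^d / Z^d, identified with the box [-1/2,1/2]^d; the dimension d
  is the cardinality of the finite index type 'n.\<close>
definition torus_box :: "(real^'n) set" where
  "torus_box = {x. \<forall>i. -1/2 \<le> x $ i \<and> x $ i \<le> 1/2}"

definition haar_torus :: "(real^'n) measure" where
  "haar_torus = lebesgue_on torus_box"

definition lat_inner :: "real^'n \<Rightarrow> int^'n \<Rightarrow> real" where
  "lat_inner x m = (\<Sum>i\<in>UNIV. x $ i * real_of_int (m $ i))"

definition fourier_coeff :: "(real^'n \<Rightarrow> real) \<Rightarrow> int^'n \<Rightarrow> complex" where
  "fourier_coeff f m =
     (\<integral>x. complex_of_real (f x) * cis (- 2 * pi * lat_inner x m) \<partial>haar_torus)"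

end

theory Submission
  imports Defs
begin

text \<open>
  Write \<open>\<parallel>f\<parallel>\<^sub>1 = \<integral>\<bar>f\<bar>\<close> and \<open>L = \<Sum>\<^sub>m \<bar>f\<^sup>^(m)\<bar>\<close>. Since \<open>f\<^sup>^\<close> is absolutely summable, the Fourier series
  of \<open>f\<close> converges uniformly and has the same coefficients as \<open>f\<close>; by uniqueness of Fourier
  coefficients \<open>f\<close> equals it almost everywhere, so \<open>\<bar>f\<bar> \<le> L\<close> a.e. Hence
  \<open>\<parallel>f\<parallel>\<^sub>1 = \<integral>f + 2\<integral>f\<^sup>- \<le> 2 L \<lambda>{f < 0}\<close>. Dually \<open>\<bar>f\<^sup>^(m)\<bar> \<le> \<parallel>f\<parallel>\<^sub>1\<close>, so
  \<open>L = \<Sum> s f\<^sup>^ + 2 \<Sum> (s f\<^sup>^)\<^sup>- \<le> 2 \<parallel>f\<parallel>\<^sub>1 #{s f\<^sup>^ < 0}\<close>. As \<open>f \<noteq> 0\<close>, \<open>\<parallel>f\<parallel>\<^sub>1 > 0\<close>, and the two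
  estimates together give \<open>\<lambda>{f < 0} \<cdot> #{s f\<^sup>^ < 0} \<ge> 1/4\<close>.

  Uniqueness is proved by mapping the torus into \<open>\<real>\<^sup>2\<^sup>d\<close> via \<open>x \<mapsto> (cos 2\<pi>x\<^sub>i, sin 2\<pi>x\<^sub>i)\<^sub>i\<close>: polynomials
  on \<open>\<real>\<^sup>2\<^sup>d\<close> pull back to trigonometric polynomials, so by Stone--Weierstrass \<open>h\<close> integrates to
  zero against every continuous function of the embedding, hence against indicators of open
  sets; as the embedding is injective on the open box, this covers all open subsets of the
  box, and a Dynkin argument extends it to all measurable sets.
\<close>

section \<open>The torus and its Haar measure\<close>

lemma torus_box_eq_cbox: "(torus_box :: (real^'n) set) = cbox (\<chi> i. -1/2) (\<chi> i. 1/2)"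
  by (auto simp: torus_box_def mem_box_cart)

lemma sets_lborel_torus_box [measurable]: "torus_box \<in> sets lborel"
  by (simp add: torus_box_eq_cbox)

lemma sets_lebesgue_torus_box [measurable]: "torus_box \<in> sets lebesgue"
  by (simp add: torus_box_eq_cbox)

lemma compact_torus_box: "compact torus_box"
  by (simp add: torus_box_eq_cbox)

lemma mem_torus_box_iff_Basis: "x \<in> torus_box \<longleftrightarrow> (\<forall>b\<in>Basis. x \<bullet> b \<in> {-1/2..1/2})"
  by (auto simp: torus_box_def Basis_vec_def inner_axis)

lemma indicator_torus_box:
  "indicator torus_box x = (\<Prod>b\<in>Basis. indicator {-1/2..1/2::real} (x \<bullet> b) :: 'a::comm_semiring_1)"
proof (cases "x \<in> torus_box")
  case True
  then show ?thesis by (simp add: mem_torus_box_iff_Basis)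
next
  case False
  then obtain b where b: "b \<in> Basis" "indicator {-1/2..1/2::real} (x \<bullet> b) = (0::'a)"
    by (auto simp: mem_torus_box_iff_Basis)
  then have "(\<Prod>b\<in>Basis. indicator {-1/2..1/2::real} (x \<bullet> b) :: 'a) = 0"
    by (intro prod_zero) auto
  then show ?thesis using False by simp
qed

lemma torus_box_boundary_null:
  "torus_box - box (\<chi> i. -1/2) (\<chi> i. 1/2) \<in> null_sets (lborel :: (real^'n::finite) measure)"
proof -
  let ?a = "(\<chi> i. -1/2) :: real^'n" and ?b = "(\<chi> i. 1/2) :: real^'n"
  have "emeasure lborel (cbox ?a ?b - box ?a ?b) = emeasure lborel (cbox ?a ?b) - emeasure lborel (box ?a ?b)"
    by (rule emeasure_Diff) (auto simp: emeasure_lborel_box_eq box_subset_cbox)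
  also have "\<dots> = 0"
    by (simp only: emeasure_lborel_cbox_eq emeasure_lborel_box_eq) simp
  finally show ?thesis unfolding torus_box_eq_cbox by (simp add: null_sets_def)
qed

lemma space_haar_torus [simp]: "space haar_torus = torus_box"
  unfolding haar_torus_def by (simp add: space_restrict_space)

lemma measurable_haar_torus_borel:
  "f \<in> borel_measurable borel \<Longrightarrow> f \<in> borel_measurable haar_torus"
  unfolding haar_torus_def
  by (intro measurable_restrict_space1 measurable_completion) simp

lemma measurable_haar_torus_continuous:
  "continuous_on UNIV f \<Longrightarrow> f \<in> borel_measurable haar_torus"
  by (intro measurable_haar_torus_borel borel_measurable_continuous_onI)

lemma integral_haar_torus_eq_lborel:
  fixes F :: "real^'n \<Rightarrow> 'b::{banach, second_countable_topology}"
  assumes [measurable]: "F \<in> borel_measurable borel"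
  shows "(\<integral>x. F x \<partial>haar_torus) = (\<integral>x. indicator torus_box x *\<^sub>R F x \<partial>lborel)"
  unfolding haar_torus_def
  by (subst integral_restrict_space) (auto simp: integral_completion)

lemma emeasure_haar_torus_space: "emeasure haar_torus (torus_box :: (real^'n::finite) set) = 1"
proof -
  have "emeasure haar_torus (torus_box :: (real^'n) set) = emeasure lborel (torus_box :: (real^'n) set)"
    unfolding haar_torus_def
    by (subst emeasure_restrict_space) (auto simp: main_part[OF sets_lborel_torus_box])
  also have "\<dots> = 1"
    unfolding torus_box_eq_cbox emeasure_lborel_cbox_eq
    by (auto simp: Basis_vec_def inner_axis intro!: prod.neutral)
  finally show ?thesis .
qed

interpretation haar_torus: finite_measure haar_torus
  by (rule finite_measureI) (simp add: emeasure_haar_torus_space)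

lemma measure_haar_torus_space: "measure haar_torus (torus_box :: (real^'n::finite) set) = 1"
  using emeasure_haar_torus_space[where 'n='n] by (simp add: measure_def)

section \<open>Characters of the torus\<close>

definition torus_char :: "int^'n \<Rightarrow> real^'n \<Rightarrow> complex" where
  "torus_char m x = cis (2 * pi * lat_inner x m)"

definition of_int_vec :: "int^'n \<Rightarrow> real^'n" where
  "of_int_vec m = (\<chi> i. real_of_int (m $ i))"

lemma lat_inner_eq_inner: "lat_inner x m = x \<bullet> of_int_vec m"
  by (simp add: lat_inner_def inner_vec_def of_int_vec_def)

lemma lat_inner_add: "lat_inner x (m + k) = lat_inner x m + lat_inner x k"
  by (simp add: lat_inner_def sum.distrib algebra_simps)

lemma lat_inner_uminus: "lat_inner x (- m) = - lat_inner x m"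
  by (simp add: lat_inner_def sum_negf)

lemma lat_inner_axis: "lat_inner x (axis i 1) = x $ i"
  by (simp add: lat_inner_def axis_def if_distrib cong: if_cong)

lemma torus_char_add: "torus_char m x * torus_char k x = torus_char (m + k) x"
  by (simp add: torus_char_def cis_mult lat_inner_add algebra_simps)

lemma torus_char_zero [simp]: "torus_char 0 x = 1"
  by (simp add: torus_char_def lat_inner_def)

lemma norm_torus_char [simp]: "norm (torus_char m x) = 1"
  by (simp add: torus_char_def)

lemma continuous_on_torus_char [continuous_intros]: "continuous_on S (torus_char m)"
  unfolding torus_char_def[abs_def] lat_inner_def by (intro continuous_intros)

lemma borel_measurable_torus_char [measurable]: "torus_char m \<in> borel_measurable borel"
  by (intro borel_measurable_continuous_onI continuous_intros)

lemma fourier_coeff_eq_integral_torus_char: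
  "fourier_coeff f m = (\<integral>x. f x * torus_char (- m) x \<partial>haar_torus)"
  by (simp add: fourier_coeff_def torus_char_def lat_inner_uminus)

lemma cis_sum: "finite I \<Longrightarrow> cis (\<Sum>i\<in>I. f i) = (\<Prod>i\<in>I. cis (f i))"
  by (induction I rule: finite_induct) (auto simp: cis_mult[symmetric])

lemma integral_cis_Icc_Ints:
  fixes k :: real
  assumes "k \<in> \<int>"
  shows "(\<integral>t. indicator {-1/2..1/2} t *\<^sub>R cis (2*pi*k*t) \<partial>lborel) = (if k = 0 then 1 else 0)"
proof (cases "k = 0")
  case True
  then show ?thesis by simp
next
  case False
  define F where "F t = inverse (\<i> * (2*pi*k)) * cis (2*pi*k*t)" for t
  have F_deriv: "(F has_vector_derivative cis (2*pi*k*t)) (at t within {-1/2..1/2})" for t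
  proof -
    have "((\<lambda>t. cis (2*pi*k*t)) has_derivative (\<lambda>h. (2*pi*k*h) *\<^sub>R (\<i> * cis (2*pi*k*t))))
        (at t within {-1/2..1/2})"
      by (rule has_derivative_cis) (auto intro!: derivative_eq_intros)
    then have "(F has_derivative (\<lambda>h. inverse (\<i>*(2*pi*k)) * ((2*pi*k*h) *\<^sub>R (\<i> * cis (2*pi*k*t)))))
        (at t within {-1/2..1/2})"
      unfolding F_def by (rule has_derivative_mult_right)
    moreover have "(\<lambda>h. inverse (\<i>*(2*pi*k)) * ((2*pi*k*h) *\<^sub>R (\<i> * cis (2*pi*k*t))))
        = (\<lambda>h. h *\<^sub>R cis (2*pi*k*t))"
      using False by (auto simp: scaleR_conv_of_real field_simps)
    ultimately show ?thesis unfolding has_vector_derivative_def by simp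
  qed
  have "(\<integral>t. indicator {-1/2..1/2} t *\<^sub>R cis (2*pi*k*t) \<partial>lborel) = F (1/2) - F (-1/2)"
    by (rule integral_FTC_Icc) (auto intro!: F_deriv[simplified] continuous_intros)
  also have "F (1/2) = F (-1/2)"
  proof -
    have "cis (2*pi*k*(1/2)) = cis (2*pi*k*(-1/2)) * cis (2*pi*k)"
      by (simp add: cis_mult algebra_simps)
    then show ?thesis using assms by (simp add: F_def)
  qed
  finally show ?thesis using False by simp
qed

interpretation lborel_product: product_sigma_finite "\<lambda>_. lborel"
  by unfold_locales

lemma integral_lborel_prod:
  fixes f :: "'a::euclidean_space \<Rightarrow> real \<Rightarrow> 'b::{real_normed_field, banach, second_countable_topology}"
  assumes "\<And>b. b \<in> Basis \<Longrightarrow> integrable lborel (f b)"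
  shows "(\<integral>x. (\<Prod>b\<in>Basis. f b (x \<bullet> b)) \<partial>lborel) = (\<Prod>b\<in>Basis. \<integral>t. f b t \<partial>lborel)"
proof -
  have [measurable]: "b \<in> Basis \<Longrightarrow> f b \<in> borel_measurable borel" for b
    using borel_measurable_integrable[OF assms] by simp
  have "(\<integral>x. (\<Prod>b\<in>Basis. f b (x \<bullet> b)) \<partial>lborel)
      = (\<integral>\<phi>. (\<Prod>b\<in>Basis. f b ((\<Sum>c\<in>Basis. \<phi> c *\<^sub>R c) \<bullet> b)) \<partial>(\<Pi>\<^sub>M b\<in>Basis. lborel))"
    by (subst lborel_eq) (simp add: integral_distr)
  also have "\<dots> = (\<integral>\<phi>. (\<Prod>b\<in>Basis. f b (\<phi> b)) \<partial>(\<Pi>\<^sub>M b\<in>Basis. lborel))"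
    by (intro Bochner_Integration.integral_cong prod.cong refl)
       (simp add: inner_sum_left inner_Basis if_distrib cong: if_cong)
  also have "\<dots> = (\<Prod>b\<in>Basis. \<integral>t. f b t \<partial>lborel)"
    by (rule lborel_product.product_integral_prod[OF _ assms]) auto
  finally show ?thesis .
qed

lemma integral_torus_char: "(\<integral>x. torus_char m x \<partial>haar_torus) = (if m = 0 then 1 else 0)"
proof -
  define k where "k = of_int_vec m"
  have k_Ints: "k \<bullet> b \<in> \<int>" if "b \<in> Basis" for b
    using that by (auto simp: Basis_vec_def inner_axis k_def of_int_vec_def)
  have factor: "indicator torus_box x *\<^sub>R torus_char m x
      = (\<Prod>b\<in>Basis. indicator {-1/2..1/2} (x \<bullet> b) *\<^sub>R cis (2*pi*(k \<bullet> b)*(x \<bullet> b)))" for x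
    unfolding torus_char_def lat_inner_eq_inner euclidean_inner[of x "of_int_vec m"] indicator_torus_box
    by (simp add: k_def scaleR_conv_of_real cis_sum sum_distrib_left prod.distrib mult_ac)
  have "(\<integral>x. torus_char m x \<partial>haar_torus) = (\<integral>x. indicator torus_box x *\<^sub>R torus_char m x \<partial>lborel)"
    by (rule integral_haar_torus_eq_lborel) measurable
  also have "\<dots> = (\<Prod>b\<in>Basis. \<integral>t. indicator {-1/2..1/2} t *\<^sub>R cis (2*pi*(k \<bullet> b)*t) \<partial>lborel)"
    unfolding factor
    using borel_integrable_atLeastAtMost'[of "-1/2" "1/2" "\<lambda>t. cis (2*pi*(k \<bullet> b)*t)" for b]
    unfolding set_integrable_def by (intro integral_lborel_prod) (simp add: continuous_intros)
  also have "\<dots> = (\<Prod>b\<in>Basis. if k \<bullet> b = 0 then 1 else 0)"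
    by (intro prod.cong refl integral_cis_Icc_Ints k_Ints)
  also have "\<dots> = (if m = 0 then 1 else 0)"
  proof -
    have "(\<forall>b\<in>Basis. k \<bullet> b = 0) \<longleftrightarrow> m = 0"
      by (simp add: euclidean_all_zero_iff k_def of_int_vec_def vec_eq_iff)
    then show ?thesis by (auto intro: prod_zero)
  qed
  finally show ?thesis .
qed

section \<open>Trigonometric polynomials\<close>

definition trig_poly :: "(real^'n \<Rightarrow> complex) \<Rightarrow> bool" where
  "trig_poly \<phi> \<longleftrightarrow> (\<exists>F c. finite F \<and> \<phi> = (\<lambda>x. \<Sum>m\<in>F. c m * torus_char m x))"

lemma trig_poly_char: "trig_poly (\<lambda>x. a * torus_char m x)"
  unfolding trig_poly_def by (rule exI[of _ "{m}"], rule exI[of _ "\<lambda>_. a"]) simp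

lemma trig_poly_const: "trig_poly (\<lambda>x. a)"
  using trig_poly_char[of a 0] by simp

lemma trig_poly_add: "trig_poly \<phi> \<Longrightarrow> trig_poly \<psi> \<Longrightarrow> trig_poly (\<lambda>x. \<phi> x + \<psi> x)"
proof -
  assume "trig_poly \<phi>" "trig_poly \<psi>"
  then obtain F c G d where F: "finite F" "\<phi> = (\<lambda>x. \<Sum>m\<in>F. c m * torus_char m x)"
    and G: "finite G" "\<psi> = (\<lambda>x. \<Sum>m\<in>G. d m * torus_char m x)"
    unfolding trig_poly_def by blast
  define e where "e m = (if m \<in> F then c m else 0) + (if m \<in> G then d m else 0)" for m
  have "\<phi> x + \<psi> x = (\<Sum>m\<in>F \<union> G. e m * torus_char m x)" for x
  proof -
    have "(\<Sum>m\<in>F \<union> G. e m * torus_char m x)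
        = (\<Sum>m\<in>F \<union> G. if m \<in> F then c m * torus_char m x else 0)
          + (\<Sum>m\<in>F \<union> G. if m \<in> G then d m * torus_char m x else 0)"
      unfolding e_def sum.distrib[symmetric] by (intro sum.cong) (auto simp: distrib_right)
    also have "\<dots> = \<phi> x + \<psi> x"
      using F G by (simp add: sum.If_cases Int_absorb1 Int_absorb2)
    finally show ?thesis by simp
  qed
  then show ?thesis unfolding trig_poly_def using F G by blast
qed

lemma trig_poly_sum:
  "finite I \<Longrightarrow> (\<And>i. i \<in> I \<Longrightarrow> trig_poly (f i)) \<Longrightarrow> trig_poly (\<lambda>x. \<Sum>i\<in>I. f i x)"
  by (induction I rule: finite_induct) (auto intro: trig_poly_add trig_poly_const)

lemma trig_poly_mult: "trig_poly \<phi> \<Longrightarrow> trig_poly \<psi> \<Longrightarrow> trig_poly (\<lambda>x. \<phi> x * \<psi> x)"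
proof -
  assume "trig_poly \<phi>" "trig_poly \<psi>"
  then obtain F c G d where F: "finite F" "\<phi> = (\<lambda>x. \<Sum>m\<in>F. c m * torus_char m x)"
    and G: "finite G" "\<psi> = (\<lambda>x. \<Sum>m\<in>G. d m * torus_char m x)"
    unfolding trig_poly_def by blast
  have "(\<lambda>x. \<phi> x * \<psi> x) = (\<lambda>x. \<Sum>m\<in>F. \<Sum>k\<in>G. (c m * d k) * torus_char (m + k) x)"
    unfolding F G sum_product by (intro ext sum.cong refl) (simp add: torus_char_add[symmetric] mult_ac)
  moreover have "trig_poly (\<lambda>x. \<Sum>m\<in>F. \<Sum>k\<in>G. (c m * d k) * torus_char (m + k) x)"
    using F G by (intro trig_poly_sum trig_poly_char) auto
  ultimately show ?thesis by simp
qed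

lemma trig_poly_cmult: "trig_poly \<phi> \<Longrightarrow> trig_poly (\<lambda>x. a * \<phi> x)"
  using trig_poly_mult[OF trig_poly_const] by blast

lemma trig_poly_cos: "trig_poly (\<lambda>x. complex_of_real (cos (2*pi*(x $ i))))"
proof -
  have eq: "(\<lambda>x. complex_of_real (cos (2*pi*(x $ i))))
      = (\<lambda>x. (1/2) * torus_char (axis i 1) x + (1/2) * torus_char (- axis i 1) x)"
    by (auto simp: torus_char_def lat_inner_uminus lat_inner_axis cis.ctr complex_eq_iff intro!: ext)
  show ?thesis unfolding eq by (intro trig_poly_add trig_poly_char)
qed

lemma trig_poly_sin: "trig_poly (\<lambda>x. complex_of_real (sin (2*pi*(x $ i))))"
proof -
  have eq: "(\<lambda>x. complex_of_real (sin (2*pi*(x $ i))))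
      = (\<lambda>x. (-\<i>/2) * torus_char (axis i 1) x + (\<i>/2) * torus_char (- axis i 1) x)"
    by (auto simp: torus_char_def lat_inner_uminus lat_inner_axis cis.ctr complex_eq_iff intro!: ext)
  show ?thesis unfolding eq by (intro trig_poly_add trig_poly_char)
qed

definition torus_embedding :: "real^'n \<Rightarrow> (real^'n) \<times> (real^'n)" where
  "torus_embedding x = ((\<chi> i. cos (2*pi*(x $ i))), (\<chi> i. sin (2*pi*(x $ i))))"

lemma continuous_on_torus_embedding [continuous_intros]: "continuous_on S torus_embedding"
  unfolding torus_embedding_def by (intro continuous_intros continuous_on_vec_lambda)

lemma torus_embedding_eq_imp_eq:
  assumes x: "x \<in> box (\<chi> i. -1/2) (\<chi> i. 1/2)" and y: "y \<in> torus_box"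
    and eq: "torus_embedding x = torus_embedding y"
  shows "x = y"
proof -
  have "x $ i = y $ i" for i
  proof -
    have "cos (2*pi*(x $ i)) = cos (2*pi*(y $ i))" "sin (2*pi*(x $ i)) = sin (2*pi*(y $ i))"
      using eq unfolding torus_embedding_def by (auto simp: vec_eq_iff)
    then obtain n :: int where "2*pi*(x $ i) = 2*pi*(y $ i) + 2*pi*n"
      using sin_cos_eq_iff by blast
    then have "2*pi*(x $ i) = 2*pi*(y $ i + n)" by (simp add: algebra_simps)
    then have n: "x $ i = y $ i + n" by simp
    have "-1/2 < x $ i" "x $ i < 1/2" "-1/2 \<le> y $ i" "y $ i \<le> 1/2"
      using x y by (auto simp: mem_box_cart torus_box_def)
    then have "n = 0" using n by linarith
    then show ?thesis using n by simp
  qed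
  then show ?thesis by (simp add: vec_eq_iff)
qed

lemma trig_poly_linear_torus_embedding:
  assumes "bounded_linear (f :: (real^'n) \<times> (real^'n) \<Rightarrow> real)"
  shows "trig_poly (\<lambda>x. complex_of_real (f (torus_embedding x)))"
proof -
  have lin: "linear f" using assms by (rule bounded_linear.linear)
  have coord: "trig_poly (\<lambda>x. complex_of_real (torus_embedding x \<bullet> b))" if "b \<in> Basis" for b
  proof -
    from that obtain i where "b = (axis i 1, 0) \<or> b = (0, axis i 1)"
      by (auto simp: Basis_prod_def Basis_vec_def)
    then show ?thesis
      by (auto simp: torus_embedding_def inner_Pair inner_axis trig_poly_cos trig_poly_sin)
  qed
  have f_eq: "f y = (\<Sum>b\<in>Basis. f b * (y \<bullet> b))" for y
    by (subst euclidean_representation[symmetric, of y])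
       (simp add: linear_sum[OF lin] linear_cmul[OF lin] mult.commute)
  have "(\<lambda>x. complex_of_real (f (torus_embedding x)))
      = (\<lambda>x. \<Sum>b\<in>Basis. complex_of_real (f b) * complex_of_real (torus_embedding x \<bullet> b))"
    by (rule ext, subst f_eq) simp
  moreover have "trig_poly \<dots>"
    by (intro trig_poly_sum trig_poly_cmult coord) simp_all
  ultimately show ?thesis by simp
qed

lemma trig_poly_polynomial_torus_embedding:
  assumes "real_polynomial_function p"
  shows "trig_poly (\<lambda>x. complex_of_real (p (torus_embedding x)))"
  using assms
proof induction
  case (linear f)
  then show ?case by (rule trig_poly_linear_torus_embedding)
next
  case (const c)
  then show ?case by (rule trig_poly_const)
next
  case (add f g)
  show ?case unfolding of_real_add by (rule trig_poly_add[OF add.IH])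
next
  case (mult f g)
  show ?case unfolding of_real_mult by (rule trig_poly_mult[OF mult.IH])
qed

section \<open>Uniqueness of Fourier coefficients\<close>

lemma integrable_mult_bounded:
  fixes h g :: "'a \<Rightarrow> complex"
  assumes "integrable M h" "g \<in> borel_measurable M" "\<And>x. x \<in> space M \<Longrightarrow> norm (g x) \<le> B"
  shows "integrable M (\<lambda>x. h x * g x)"
proof (rule Bochner_Integration.integrable_bound)
  show "integrable M (\<lambda>x. complex_of_real B * h x)" using assms(1) by simp
  show "AE x in M. norm (h x * g x) \<le> norm (complex_of_real B * h x)"
  proof (rule AE_I2)
    fix x assume "x \<in> space M"
    then have "norm (h x) * norm (g x) \<le> norm (h x) * \<bar>B\<bar>"
      using assms(3) by (intro mult_left_mono) fastforce+
    then show "norm (h x * g x) \<le> norm (complex_of_real B * h x)"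
      by (simp add: norm_mult mult.commute)
  qed
qed (use assms in measurable)

lemma integral_mult_trig_poly_eq_0:
  assumes h: "integrable haar_torus h"
    and coeff_0: "\<And>m. (\<integral>x. h x * torus_char m x \<partial>haar_torus) = 0"
    and "trig_poly \<phi>"
  shows "(\<integral>x. h x * \<phi> x \<partial>haar_torus) = 0"
proof -
  from \<open>trig_poly \<phi>\<close> obtain F c where F: "finite F" "\<phi> = (\<lambda>x. \<Sum>m\<in>F. c m * torus_char m x)"
    unfolding trig_poly_def by blast
  have "integrable haar_torus (\<lambda>x. h x * torus_char m x)" for m
    by (rule integrable_mult_bounded[OF h, of _ 1]) (auto intro: measurable_haar_torus_borel)
  then have "(\<integral>x. h x * \<phi> x \<partial>haar_torus) = (\<Sum>m\<in>F. c m * (\<integral>x. h x * torus_char m x \<partial>haar_torus))"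
    unfolding F by (simp add: sum_distrib_left mult_ac)
  also have "\<dots> = 0" by (simp add: coeff_0)
  finally show ?thesis .
qed

lemma norm_integral_mult_le_approx:
  fixes h \<phi> p :: "'a \<Rightarrow> complex"
  assumes "integrable M (\<lambda>x. h x * \<phi> x)" "integrable M (\<lambda>x. h x * p x)" "integrable M h"
    and "(\<integral>x. h x * p x \<partial>M) = 0" and "\<And>x. x \<in> space M \<Longrightarrow> norm (\<phi> x - p x) \<le> \<epsilon>"
  shows "norm (\<integral>x. h x * \<phi> x \<partial>M) \<le> \<epsilon> * (\<integral>x. norm (h x) \<partial>M)"
proof -
  have "(\<integral>x. h x * \<phi> x \<partial>M) = (\<integral>x. h x * (\<phi> x - p x) \<partial>M)"
    using assms(1,2,4) by (simp add: right_diff_distrib)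
  also have "norm \<dots> \<le> (\<integral>x. norm (h x * (\<phi> x - p x)) \<partial>M)"
    by (rule integral_norm_bound)
  also have "\<dots> \<le> (\<integral>x. \<epsilon> * norm (h x) \<partial>M)"
  proof (rule integral_mono)
    show "integrable M (\<lambda>x. norm (h x * (\<phi> x - p x)))"
      using assms(1,2) by (simp add: right_diff_distrib)
    fix x assume "x \<in> space M"
    then have "norm (h x) * norm (\<phi> x - p x) \<le> norm (h x) * \<epsilon>"
      using assms(5) by (intro mult_left_mono) auto
    then show "norm (h x * (\<phi> x - p x)) \<le> \<epsilon> * norm (h x)"
      by (simp add: norm_mult mult.commute)
  qed (use assms(3) in simp)
  finally show ?thesis by simp
qed

lemma eq_0_if_norm_le_eps_mult:
  fixes x :: "'a::real_normed_vector"
  assumes "\<And>\<epsilon>. \<epsilon> > 0 \<Longrightarrow> norm x \<le> \<epsilon> * C"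
  shows "x = 0"
proof -
  have "norm x \<le> 0 + e" if "e > 0" for e
  proof -
    have "norm x \<le> e / (\<bar>C\<bar> + 1) * C" using that by (intro assms divide_pos_pos) auto
    also have "\<dots> \<le> e / (\<bar>C\<bar> + 1) * (\<bar>C\<bar> + 1)" using that by (intro mult_left_mono) auto
    also have "\<dots> = e" by (simp add: add_nonneg_eq_0_iff)
    finally show ?thesis by simp
  qed
  then show ?thesis using field_le_epsilon[of "norm x" 0] by simp
qed

lemma integral_mult_continuous_torus_embedding_eq_0:
  fixes h :: "real^'n::finite \<Rightarrow> complex" and \<psi> :: "(real^'n) \<times> (real^'n) \<Rightarrow> real"
  assumes h: "integrable haar_torus h"
    and coeff_0: "\<And>m. (\<integral>x. h x * torus_char m x \<partial>haar_torus) = 0"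
    and \<psi>: "continuous_on UNIV \<psi>"
  shows "(\<integral>x. h x * \<psi> (torus_embedding x) \<partial>haar_torus) = 0"
proof -
  define S where "S = torus_embedding ` (torus_box :: (real^'n) set)"
  have S: "compact S"
    unfolding S_def by (intro compact_continuous_image continuous_intros compact_torus_box)
  have pullback: "continuous_on UNIV g \<Longrightarrow> integrable haar_torus (\<lambda>x. h x * g (torus_embedding x))"
    for g :: "(real^'n) \<times> (real^'n) \<Rightarrow> real"
  proof -
    assume g: "continuous_on UNIV g"
    obtain B where "\<And>y. y \<in> S \<Longrightarrow> \<bar>g y\<bar> \<le> B"
      using compact_imp_bounded[OF compact_continuous_image[OF continuous_on_subset[OF g] S]]
      unfolding bounded_real by auto
    then show ?thesis
      by (intro integrable_mult_bounded[OF h, of _ B] measurable_haar_torus_continuous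
          continuous_on_of_real continuous_on_compose2[OF g continuous_on_torus_embedding])
         (auto simp: S_def)
  qed
  have "norm (\<integral>x. h x * \<psi> (torus_embedding x) \<partial>haar_torus) \<le> \<epsilon> * (\<integral>x. norm (h x) \<partial>haar_torus)"
    if "\<epsilon> > 0" for \<epsilon>
  proof -
    obtain p where p: "polynomial_function p" "\<And>y. y \<in> S \<Longrightarrow> norm (\<psi> y - p y) < \<epsilon>"
      using Stone_Weierstrass_polynomial_function[OF S continuous_on_subset[OF \<psi> subset_UNIV] \<open>\<epsilon> > 0\<close>]
      by auto
    have "(\<integral>x. h x * p (torus_embedding x) \<partial>haar_torus) = 0"
      using p(1) by (intro integral_mult_trig_poly_eq_0[OF h coeff_0] trig_poly_polynomial_torus_embedding)
                    (simp add: real_polynomial_function_eq)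
    moreover have "norm (complex_of_real (\<psi> (torus_embedding x)) - p (torus_embedding x)) \<le> \<epsilon>"
      if "x \<in> space haar_torus" for x
      using p(2)[of "torus_embedding x"] that by (simp add: S_def flip: of_real_diff)
    moreover have "integrable haar_torus (\<lambda>x. h x * p (torus_embedding x))"
      by (rule pullback) (rule continuous_on_polymonial_function[OF p(1)])
    ultimately show ?thesis
      by (intro norm_integral_mult_le_approx h pullback \<psi>) auto
  qed
  then show ?thesis by (rule eq_0_if_norm_le_eps_mult)
qed

lemma continuous_approximation_indicator_open:
  fixes V :: "'a::metric_space set"
  assumes "open V"
  obtains \<psi> :: "nat \<Rightarrow> 'a \<Rightarrow> real"
  where "\<And>k. continuous_on UNIV (\<psi> k)" "\<And>k y. \<bar>\<psi> k y\<bar> \<le> 1"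
    "\<And>y. (\<lambda>k. \<psi> k y) \<longlonglongrightarrow> indicator V y"
proof (cases "V = UNIV")
  case True
  then show ?thesis by (intro that[of "\<lambda>_ _. 1"]) auto
next
  case False
  define \<psi> where "\<psi> k y = min 1 (real k * infdist y (- V))" for k :: nat and y
  have "(\<lambda>k. \<psi> k y) \<longlonglongrightarrow> indicator V y" for y
  proof (cases "y \<in> V")
    case True
    have pos: "infdist y (- V) > 0"
      using True False assms by (intro infdist_pos_not_in_closed) auto
    obtain N :: nat where "real N > 1 / infdist y (- V)"
      using reals_Archimedean2 by blast
    then have N: "real N * infdist y (- V) > 1"
      using pos by (simp add: field_simps)
    have "real k * infdist y (- V) \<ge> 1" if "k \<ge> N" for k
    proof -
      have "real N * infdist y (- V) \<le> real k * infdist y (- V)"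
        using that pos by (intro mult_right_mono) auto
      then show ?thesis using N by linarith
    qed
    then have "\<forall>\<^sub>F k in sequentially. \<psi> k y = 1"
      unfolding \<psi>_def by (intro eventually_sequentiallyI[of N]) simp
    then show ?thesis using True by (simp add: tendsto_eventually)
  next
    case False
    then show ?thesis by (simp add: \<psi>_def)
  qed
  moreover have "continuous_on UNIV (\<psi> k)" for k
    unfolding \<psi>_def[abs_def] by (intro continuous_intros continuous_on_infdist continuous_on_id)
  moreover have "\<bar>\<psi> k y\<bar> \<le> 1" for k y
    by (simp add: \<psi>_def infdist_nonneg)
  ultimately show ?thesis by (intro that)
qed

lemma integral_mult_indicator_open_torus_embedding_eq_0:
  fixes h :: "real^'n::finite \<Rightarrow> complex"
  assumes h: "integrable haar_torus h"
    and coeff_0: "\<And>m. (\<integral>x. h x * torus_char m x \<partial>haar_torus) = 0"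
    and V: "open V"
  shows "(\<integral>x. h x * indicator V (torus_embedding x) \<partial>haar_torus) = 0"
proof -
  obtain \<psi> :: "nat \<Rightarrow> (real^'n) \<times> (real^'n) \<Rightarrow> real"
    where \<psi>: "\<And>k. continuous_on UNIV (\<psi> k)" "\<And>k y. \<bar>\<psi> k y\<bar> \<le> 1"
      "\<And>y. (\<lambda>k. \<psi> k y) \<longlonglongrightarrow> indicator V y"
    using continuous_approximation_indicator_open[OF V] by blast
  have [measurable]: "torus_embedding \<in> borel_measurable borel"
    by (intro borel_measurable_continuous_onI continuous_intros)
  have [measurable]: "V \<in> sets borel" using V by (rule borel_open)
  have h_meas: "h \<in> borel_measurable haar_torus"
    using h by (rule borel_measurable_integrable)
  have \<psi>_meas: "(\<lambda>x. complex_of_real (\<psi> k (torus_embedding x))) \<in> borel_measurable haar_torus" for k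
    by (intro measurable_haar_torus_continuous continuous_on_of_real
        continuous_on_compose2[OF \<psi>(1) continuous_on_torus_embedding]) auto
  have V_meas: "(\<lambda>x. indicator V (torus_embedding x) :: complex) \<in> borel_measurable haar_torus"
    by (rule measurable_haar_torus_borel) measurable
  have lim: "(\<lambda>k. complex_of_real (\<psi> k y)) \<longlonglongrightarrow> indicator V y" for y
    using tendsto_of_real[OF \<psi>(3)[of y]] by (cases "y \<in> V") auto
  have "(\<lambda>k. \<integral>x. h x * \<psi> k (torus_embedding x) \<partial>haar_torus)
      \<longlonglongrightarrow> (\<integral>x. h x * indicator V (torus_embedding x) \<partial>haar_torus)"
  proof (rule integral_dominated_convergence[where w="\<lambda>x. norm (h x)"])
    show "AE x in haar_torus. (\<lambda>k. h x * \<psi> k (torus_embedding x))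
        \<longlonglongrightarrow> h x * indicator V (torus_embedding x)"
      by (intro AE_I2 tendsto_mult_left lim)
    show "AE x in haar_torus. norm (h x * \<psi> k (torus_embedding x)) \<le> norm (h x)" for k
      using \<psi>(2) by (intro AE_I2) (simp add: norm_mult mult_left_le)
    show "(\<lambda>x. h x * \<psi> k (torus_embedding x)) \<in> borel_measurable haar_torus" for k
      by (rule borel_measurable_times[OF h_meas \<psi>_meas])
    show "(\<lambda>x. h x * indicator V (torus_embedding x)) \<in> borel_measurable haar_torus"
      by (rule borel_measurable_times[OF h_meas V_meas])
    show "integrable haar_torus (\<lambda>x. norm (h x))"
      using h by (rule integrable_norm)
  qed
  moreover have "(\<integral>x. h x * \<psi> k (torus_embedding x) \<partial>haar_torus) = 0" for k
    by (rule integral_mult_continuous_torus_embedding_eq_0[OF h coeff_0 \<psi>(1)])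
  ultimately show ?thesis by (simp add: LIMSEQ_const_iff)
qed

text \<open>The embedding is injective on the open box, so an open subset of the box is the preimage
  of an open set: the complement of the (compact) image of the rest of the box.\<close>
lemma integral_mult_indicator_open_eq_0:
  fixes h :: "real^'n::finite \<Rightarrow> complex"
  assumes h: "integrable haar_torus h"
    and coeff_0: "\<And>m. (\<integral>x. h x * torus_char m x \<partial>haar_torus) = 0"
    and U: "open U" "U \<subseteq> box (\<chi> i. -1/2) (\<chi> i. 1/2)"
  shows "(\<integral>x. h x * indicator U x \<partial>haar_torus) = 0"
proof -
  define K where "K = torus_embedding ` (torus_box - U)"
  have "compact (torus_box - U)"
    using U(1) by (simp add: Diff_eq compact_Int_closed compact_torus_box closed_Compl)
  then have "open (- K)"
    unfolding K_def by (intro open_Compl compact_imp_closed compact_continuous_image continuous_intros)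
  moreover have "torus_embedding x \<in> - K \<longleftrightarrow> x \<in> U" if "x \<in> torus_box" for x
  proof
    show "x \<in> U" if "torus_embedding x \<in> - K"
      using that \<open>x \<in> torus_box\<close> by (auto simp: K_def)
    show "torus_embedding x \<in> - K" if "x \<in> U"
    proof
      assume "torus_embedding x \<in> K"
      then obtain y where "y \<in> torus_box - U" "torus_embedding x = torus_embedding y"
        by (auto simp: K_def)
      then show False
        using torus_embedding_eq_imp_eq[of x y] \<open>x \<in> U\<close> U(2) by auto
    qed
  qed
  then have "(\<integral>x. h x * indicator U x \<partial>haar_torus) = (\<integral>x. h x * indicator (- K) (torus_embedding x) \<partial>haar_torus)"
    by (intro Bochner_Integration.integral_cong) (auto simp: indicator_def)
  ultimately show ?thesis
    using integral_mult_indicator_open_torus_embedding_eq_0[OF h coeff_0] by simp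
qed

lemma integral_indicator_borel_eq_0:
  fixes H :: "'a::euclidean_space \<Rightarrow> 'b::{banach, second_countable_topology}"
  assumes H: "integrable lebesgue H"
    and open_0: "\<And>U. open U \<Longrightarrow> (\<integral>x. indicator U x *\<^sub>R H x \<partial>lebesgue) = 0"
    and "A \<in> sets borel"
  shows "(\<integral>x. indicator A x *\<^sub>R H x \<partial>lebesgue) = 0"
proof -
  have "Int_stable {U :: 'a set. open U}" "{U :: 'a set. open U} \<subseteq> Pow UNIV"
    by (auto simp: Int_stable_def)
  moreover have "A \<in> sigma_sets UNIV {U. open U}" using assms(3) by (simp add: sets_borel)
  ultimately show ?thesis
  proof (induction rule: sigma_sets_induct_disjoint)
    case (basic U)
    then show ?case by (simp add: open_0)
  next
    case empty
    then show ?case by simp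
  next
    case (compl A)
    have "A \<in> sets lebesgue" using compl(1) by (simp add: sets_borel[symmetric])
    then have "(\<integral>x. indicator (UNIV - A) x *\<^sub>R H x \<partial>lebesgue)
        = (\<integral>x. H x \<partial>lebesgue) - (\<integral>x. indicator A x *\<^sub>R H x \<partial>lebesgue)"
      using H by (subst Bochner_Integration.integral_diff[symmetric])
                 (auto intro!: integrable_mult_indicator Bochner_Integration.integral_cong
                       split: split_indicator)
    then show ?case using compl(2) open_0[of UNIV] by simp
  next
    case (union A)
    have A: "A i \<in> sets lebesgue" for i using union(2) by (auto simp: sets_borel[symmetric])
    have "(LINT x:(\<Union>i. A i)|lebesgue. H x) = (\<Sum>i. (LINT x:(A i)|lebesgue. H x))"
    proof (rule lebesgue_integral_countable_add)
      show "set_integrable lebesgue (\<Union>i. A i) H"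
        unfolding set_integrable_def using H A by (intro integrable_mult_indicator) auto
    qed (use A union(1) in \<open>auto simp: disjoint_family_on_def\<close>)
    then show ?case using union(3) by (simp add: set_lebesgue_integral_def)
  qed
qed

lemma sigma_finite_lebesgue: "sigma_finite_measure (lebesgue :: 'a::euclidean_space measure)"
proof -
  obtain A :: "'a set set" where A: "countable A" "A \<subseteq> sets lborel" "\<Union>A = space lborel"
    "\<forall>a\<in>A. emeasure lborel a \<noteq> \<infinity>"
    using lborel.sigma_finite_countable by blast
  show ?thesis
    by (rule sigma_finite_measure.intro, rule exI[of _ A]) (use A in \<open>auto simp: emeasure_completion\<close>)
qed

lemma AE_lebesgue_eq_0_if_integral_open_eq_0:
  fixes H :: "'a::euclidean_space \<Rightarrow> 'b::{banach, second_countable_topology}"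
  assumes H: "integrable lebesgue H"
    and open_0: "\<And>U. open U \<Longrightarrow> (\<integral>x. indicator U x *\<^sub>R H x \<partial>lebesgue) = 0"
  shows "AE x in lebesgue. H x = 0"
proof (rule sigma_finite_measure.density_unique_banach[OF sigma_finite_lebesgue H])
  fix A :: "'a set" assume "A \<in> sets lebesgue"
  then obtain S N N' where SN: "A = S \<union> N" "N \<subseteq> N'" "N' \<in> null_sets lborel" "S \<in> sets lborel"
    by (rule sets_completionE)
  have "AE x in lebesgue. x \<notin> N'"
    using SN(3) by (intro AE_completion AE_not_in)
  moreover have "S \<in> sets lebesgue" using SN(4) by simp
  ultimately have "(\<integral>x. indicator A x *\<^sub>R H x \<partial>lebesgue) = (\<integral>x. indicator S x *\<^sub>R H x \<partial>lebesgue)"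
    using \<open>A \<in> sets lebesgue\<close> borel_measurable_integrable[OF H]
    by (intro integral_cong_AE borel_measurable_scaleR borel_measurable_indicator)
       (use SN(1,2) in \<open>auto split: split_indicator\<close>)
  also have "\<dots> = 0" using SN(4) by (intro integral_indicator_borel_eq_0[OF H open_0]) auto
  finally show "set_lebesgue_integral lebesgue A H = set_lebesgue_integral lebesgue A (\<lambda>_. 0)"
    by (simp add: set_lebesgue_integral_def)
qed simp

theorem fourier_uniqueness:
  fixes h :: "real^'n::finite \<Rightarrow> complex"
  assumes h: "integrable haar_torus h"
    and coeff_0: "\<And>m. (\<integral>x. h x * torus_char m x \<partial>haar_torus) = 0"
  shows "AE x in haar_torus. h x = 0"
proof -
  define I where "I = (box (\<chi> i. -1/2) (\<chi> i. 1/2) :: (real^'n) set)"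
  define H where "H x = indicator torus_box x *\<^sub>R h x" for x
  have H: "integrable lebesgue H"
    using h unfolding haar_torus_def H_def[abs_def] by (subst (asm) integrable_restrict_space) auto
  have AE_torus_box_I: "AE x in lebesgue. x \<in> torus_box \<longrightarrow> x \<in> I"
    using AE_not_in[OF torus_box_boundary_null] unfolding I_def by (intro AE_completion) auto
  have "(\<integral>x. indicator U x *\<^sub>R H x \<partial>lebesgue) = 0" if "open U" for U
  proof -
    have sets: "U \<in> sets lebesgue" "U \<inter> I \<in> sets lebesgue" using \<open>open U\<close> by (auto simp: I_def)
    have "(\<integral>x. indicator U x *\<^sub>R H x \<partial>lebesgue) = (\<integral>x. indicator (U \<inter> I) x *\<^sub>R H x \<partial>lebesgue)"
      using AE_torus_box_I
      by (intro integral_cong_AE borel_measurable_scaleR borel_measurable_indicator sets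
          borel_measurable_integrable[OF H])
         (auto simp: H_def split: split_indicator)
    also have "\<dots> = (\<integral>x. indicator torus_box x *\<^sub>R (h x * indicator (U \<inter> I) x) \<partial>lebesgue)"
      by (intro Bochner_Integration.integral_cong) (auto simp: H_def split: split_indicator)
    also have "\<dots> = (\<integral>x. h x * indicator (U \<inter> I) x \<partial>haar_torus)"
      unfolding haar_torus_def by (subst integral_restrict_space) auto
    also have "\<dots> = 0"
      using \<open>open U\<close> by (intro integral_mult_indicator_open_eq_0[OF h coeff_0]) (auto simp: I_def)
    finally show ?thesis .
  qed
  then have "AE x in lebesgue. H x = 0"
    by (rule AE_lebesgue_eq_0_if_integral_open_eq_0[OF H])
  then show ?thesis
    unfolding haar_torus_def by (subst AE_restrict_space_iff) (auto simp: H_def elim!: AE_mp)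
qed

section \<open>Absolutely convergent Fourier series\<close>

lemma tendsto_infsum_minus_sum:
  fixes a :: "'a \<Rightarrow> 'b::{topological_ab_group_add, t2_space}"
  assumes "a summable_on A"
  shows "((\<lambda>F. infsum a A - sum a F) \<longlongrightarrow> 0) (finite_subsets_at_top A)"
proof -
  have "(sum a \<longlongrightarrow> infsum a A) (finite_subsets_at_top A)"
    using has_sum_infsum[OF assms] by (simp add: has_sum_def)
  from tendsto_diff[OF tendsto_const[of "infsum a A"] this] show ?thesis by simp
qed

lemma norm_infsum_mult_minus_sum_le:
  fixes c u :: "'a \<Rightarrow> 'b::{real_normed_div_algebra, banach}"
  assumes c: "(\<lambda>m. norm (c m)) summable_on UNIV" and F: "finite F" and u: "\<And>m. norm (u m) \<le> 1"
  shows "norm ((\<Sum>\<^sub>\<infinity>m. c m * u m) - (\<Sum>m\<in>F. c m * u m))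
          \<le> (\<Sum>\<^sub>\<infinity>m. norm (c m)) - (\<Sum>m\<in>F. norm (c m))"
proof -
  have le: "norm (c m * u m) \<le> norm (c m)" for m
    using u[of m] by (simp add: norm_mult mult_left_le)
  have abs: "(\<lambda>m. norm (c m * u m)) summable_on A" for A
    by (rule summable_on_subset_banach[OF summable_on_comparison_test[OF c]]) (auto simp: le)
  have "(\<Sum>\<^sub>\<infinity>m. c m * u m) - (\<Sum>m\<in>F. c m * u m) = (\<Sum>\<^sub>\<infinity>m\<in>UNIV - F. c m * u m)"
    using F abs_summable_summable[OF abs] by (subst infsum_Diff) auto
  also have "norm \<dots> \<le> (\<Sum>\<^sub>\<infinity>m\<in>UNIV - F. norm (c m * u m))"
    by (rule norm_infsum_bound) (use abs in auto)
  also have "\<dots> \<le> (\<Sum>\<^sub>\<infinity>m\<in>UNIV - F. norm (c m))"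
    by (rule infsum_mono) (use abs summable_on_subset_banach[OF c] le in auto)
  also have "\<dots> = (\<Sum>\<^sub>\<infinity>m. norm (c m)) - (\<Sum>m\<in>F. norm (c m))"
    using F c by (subst infsum_Diff) auto
  finally show ?thesis .
qed

definition fourier_series :: "(int^'n \<Rightarrow> complex) \<Rightarrow> real^'n \<Rightarrow> complex" where
  "fourier_series c x = (\<Sum>\<^sub>\<infinity>m. c m * torus_char m x)"

lemma norm_fourier_series_minus_sum_le:
  assumes "(\<lambda>m. norm (c m)) summable_on UNIV" "finite F"
  shows "norm (fourier_series c x - (\<Sum>m\<in>F. c m * torus_char m x))
          \<le> (\<Sum>\<^sub>\<infinity>m. norm (c m)) - (\<Sum>m\<in>F. norm (c m))"
  unfolding fourier_series_def by (rule norm_infsum_mult_minus_sum_le[OF assms]) simp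

lemma norm_fourier_series_le:
  assumes "(\<lambda>m. norm (c m)) summable_on UNIV"
  shows "norm (fourier_series c x) \<le> (\<Sum>\<^sub>\<infinity>m. norm (c m))"
  using norm_fourier_series_minus_sum_le[OF assms, of "{}"] by simp

lemma continuous_on_fourier_series:
  assumes c: "(\<lambda>m. norm (c m)) summable_on UNIV"
  shows "continuous_on UNIV (fourier_series c)"
proof (rule uniform_limit_theorem)
  show "\<forall>\<^sub>F F in finite_subsets_at_top UNIV. continuous_on UNIV (\<lambda>x. \<Sum>m\<in>F. c m * torus_char m x)"
    by (intro always_eventually allI continuous_intros)
  show "uniform_limit UNIV (\<lambda>F x. \<Sum>m\<in>F. c m * torus_char m x) (fourier_series c)
      (finite_subsets_at_top UNIV)"
  proof (rule uniform_limitI)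
    fix e :: real assume "e > 0"
    have "\<forall>\<^sub>F F in finite_subsets_at_top UNIV. (\<Sum>\<^sub>\<infinity>m. norm (c m)) - (\<Sum>m\<in>F. norm (c m)) < e"
      using order_tendstoD(2)[OF tendsto_infsum_minus_sum[OF c] \<open>e > 0\<close>] .
    moreover have "\<forall>\<^sub>F F in finite_subsets_at_top UNIV. finite F"
      by (rule eventually_finite_subsets_at_top_weakI)
    ultimately show "\<forall>\<^sub>F F in finite_subsets_at_top UNIV.
        \<forall>x\<in>UNIV. dist (\<Sum>m\<in>F. c m * torus_char m x) (fourier_series c x) < e"
    proof eventually_elim
      case (elim F)
      then show ?case
        using norm_fourier_series_minus_sum_le[OF c]
        by (auto simp: dist_norm norm_minus_commute intro: order.strict_trans1)
    qed
  qed
qed simp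

lemma integrable_fourier_series_mult:
  assumes c: "(\<lambda>m. norm (c m)) summable_on UNIV"
    and g: "g \<in> borel_measurable borel" "\<And>x. norm (g x) \<le> 1"
  shows "integrable haar_torus (\<lambda>x. fourier_series c x * g x)"
proof (rule haar_torus.integrable_const_bound[where B="\<Sum>\<^sub>\<infinity>m. norm (c m)"])
  show "AE x in haar_torus. norm (fourier_series c x * g x) \<le> (\<Sum>\<^sub>\<infinity>m. norm (c m))"
  proof (rule AE_I2)
    fix x
    have "norm (fourier_series c x) * norm (g x) \<le> (\<Sum>\<^sub>\<infinity>m. norm (c m)) * 1"
      using norm_fourier_series_le[OF c] g(2) by (intro mult_mono) (auto intro: infsum_nonneg)
    then show "norm (fourier_series c x * g x) \<le> (\<Sum>\<^sub>\<infinity>m. norm (c m))"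
      by (simp add: norm_mult)
  qed
  have "fourier_series c \<in> borel_measurable borel"
    by (rule borel_measurable_continuous_onI[OF continuous_on_fourier_series[OF c]])
  then show "(\<lambda>x. fourier_series c x * g x) \<in> borel_measurable haar_torus"
    using g(1) by (intro measurable_haar_torus_borel) measurable
qed

lemma integrable_torus_char [simp]: "integrable haar_torus (torus_char m)"
  by (rule haar_torus.integrable_const_bound[where B=1]) (auto intro: measurable_haar_torus_borel)

lemma integral_fourier_series_mult_char:
  fixes c :: "int^'n \<Rightarrow> complex"
  assumes c: "(\<lambda>m. norm (c m)) summable_on UNIV"
  shows "(\<integral>x. fourier_series c x * torus_char (- k) x \<partial>haar_torus) = c k"
proof -
  let ?S = "\<lambda>F x. \<Sum>m\<in>F. c m * torus_char m x"
  have partial_sum: "(\<integral>x. ?S F x * torus_char (- k) x \<partial>haar_torus) = c k" if "finite F" "k \<in> F" for F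
  proof -
    have "(\<integral>x. ?S F x * torus_char (- k) x \<partial>haar_torus)
        = (\<integral>x. (\<Sum>m\<in>F. c m * torus_char (m - k) x) \<partial>haar_torus)"
      by (simp add: sum_distrib_right mult.assoc torus_char_add)
    also have "\<dots> = (\<Sum>m\<in>F. c m * (\<integral>x. torus_char (m - k) x \<partial>haar_torus))"
      by (subst Bochner_Integration.integral_sum) auto
    also have "\<dots> = c k"
      using that by (simp add: integral_torus_char if_distrib cong: if_cong)
    finally show ?thesis .
  qed
  have close: "norm ((\<integral>x. fourier_series c x * torus_char (- k) x \<partial>haar_torus) - c k)
      \<le> (\<Sum>\<^sub>\<infinity>m. norm (c m)) - (\<Sum>m\<in>F. norm (c m))" if "finite F" "k \<in> F" for F
  proof -
    have int_S: "integrable haar_torus (\<lambda>x. ?S F x * torus_char (- k) x)"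
      by (rule haar_torus.integrable_const_bound[where B="\<Sum>m\<in>F. norm (c m)"])
         (auto simp: norm_mult intro!: measurable_haar_torus_borel norm_sum[THEN order_trans] sum_mono)
    have int_g: "integrable haar_torus (\<lambda>x. fourier_series c x * torus_char (- k) x)"
      by (rule integrable_fourier_series_mult[OF c]) auto
    have "(\<integral>x. fourier_series c x * torus_char (- k) x \<partial>haar_torus) - c k
        = (\<integral>x. (fourier_series c x - ?S F x) * torus_char (- k) x \<partial>haar_torus)"
      using partial_sum[OF that] int_S int_g by (simp add: left_diff_distrib)
    also have "norm \<dots> \<le> (\<integral>x. norm ((fourier_series c x - ?S F x) * torus_char (- k) x) \<partial>haar_torus)"
      by (rule integral_norm_bound)
    also have "\<dots> \<le> (\<integral>x. (\<Sum>\<^sub>\<infinity>m. norm (c m)) - (\<Sum>m\<in>F. norm (c m)) \<partial>(haar_torus :: (real^'n) measure))"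
    proof (rule integral_mono)
      show "integrable haar_torus (\<lambda>x. norm ((fourier_series c x - ?S F x) * torus_char (- k) x))"
        using int_S int_g by (simp add: left_diff_distrib)
      show "norm ((fourier_series c x - ?S F x) * torus_char (- k) x)
          \<le> (\<Sum>\<^sub>\<infinity>m. norm (c m)) - (\<Sum>m\<in>F. norm (c m))" for x
        using norm_fourier_series_minus_sum_le[OF c \<open>finite F\<close>] by (simp add: norm_mult)
    qed simp
    also have "\<dots> = (\<Sum>\<^sub>\<infinity>m. norm (c m)) - (\<Sum>m\<in>F. norm (c m))"
      by (simp add: measure_haar_torus_space)
    finally show ?thesis .
  qed
  have "\<forall>\<^sub>F F in finite_subsets_at_top UNIV. finite F \<and> k \<in> F"
    by (auto simp: eventually_finite_subsets_at_top intro!: exI[of _ "{k}"])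
  then have "norm ((\<integral>x. fourier_series c x * torus_char (- k) x \<partial>haar_torus) - c k) \<le> 0"
    by (intro tendsto_lowerbound[OF tendsto_infsum_minus_sum[OF c]]) (auto elim!: eventually_mono intro: close)
  then show ?thesis by simp
qed

theorem fourier_inversion_bound:
  fixes f :: "real^'n::finite \<Rightarrow> real"
  assumes f: "integrable haar_torus f"
    and summable: "(\<lambda>m. norm (fourier_coeff f m)) summable_on UNIV"
  shows "AE x in haar_torus. \<bar>f x\<bar> \<le> (\<Sum>\<^sub>\<infinity>m. norm (fourier_coeff f m))"
proof -
  let ?g = "fourier_series (fourier_coeff f)"
  have int_g: "integrable haar_torus (\<lambda>x. ?g x * torus_char m x)" for m
    by (rule integrable_fourier_series_mult[OF summable]) auto
  have int_f: "integrable haar_torus (\<lambda>x. f x * torus_char m x)" for m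
    by (rule integrable_mult_bounded[where B=1]) (use f in \<open>auto intro: measurable_haar_torus_borel\<close>)
  have "AE x in haar_torus. f x - ?g x = 0"
  proof (rule fourier_uniqueness)
    show "integrable haar_torus (\<lambda>x. f x - ?g x)"
      using f int_g[of 0] by simp
    show "(\<integral>x. (f x - ?g x) * torus_char m x \<partial>haar_torus) = 0" for m
    proof -
      have "(\<integral>x. (f x - ?g x) * torus_char m x \<partial>haar_torus)
          = (\<integral>x. f x * torus_char m x \<partial>haar_torus) - (\<integral>x. ?g x * torus_char m x \<partial>haar_torus)"
        using int_f int_g by (simp add: left_diff_distrib)
      also have "(\<integral>x. f x * torus_char m x \<partial>haar_torus) = fourier_coeff f (- m)"
        by (simp add: fourier_coeff_eq_integral_torus_char)
      also have "(\<integral>x. ?g x * torus_char m x \<partial>haar_torus) = fourier_coeff f (- m)"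
        using integral_fourier_series_mult_char[OF summable, of "- m"] by simp
      finally show ?thesis by simp
    qed
  qed
  then show ?thesis
  proof eventually_elim
    case (elim x)
    then have "\<bar>f x\<bar> = norm (?g x)" by (metis eq_iff_diff_eq_0 norm_of_real)
    then show ?case using norm_fourier_series_le[OF summable] by simp
  qed
qed

section \<open>The uncertainty principle\<close>

lemma norm_fourier_coeff_le: "norm (fourier_coeff f m) \<le> (\<integral>x. \<bar>f x\<bar> \<partial>haar_torus)"
proof -
  have "norm (fourier_coeff f m) \<le> (\<integral>x. norm (f x * cis (- 2 * pi * lat_inner x m)) \<partial>haar_torus)"
    unfolding fourier_coeff_def by (rule integral_norm_bound)
  then show ?thesis by (simp add: norm_mult)
qed

lemma integral_abs_pos:
  fixes f :: "'a \<Rightarrow> real"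
  assumes f: "integrable M f" and nonzero: "\<not> (AE x in M. f x = 0)"
  shows "(\<integral>x. \<bar>f x\<bar> \<partial>M) > 0"
proof -
  have "(\<integral>x. \<bar>f x\<bar> \<partial>M) \<noteq> 0"
  proof
    assume "(\<integral>x. \<bar>f x\<bar> \<partial>M) = 0"
    then have "AE x in M. \<bar>f x\<bar> = 0"
      using f by (subst (asm) integral_nonneg_eq_0_iff_AE) auto
    then show False using nonzero by simp
  qed
  then show ?thesis by (simp add: order_less_le)
qed

lemma integral_abs_le_measure_neg:
  fixes f :: "'a \<Rightarrow> real"
  assumes "finite_measure M" and f: "integrable M f"
    and bound: "AE x in M. \<bar>f x\<bar> \<le> L" and nonpos: "(\<integral>x. f x \<partial>M) \<le> 0"
  shows "(\<integral>x. \<bar>f x\<bar> \<partial>M) \<le> 2 * L * measure M {x \<in> space M. f x < 0}"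
proof -
  interpret finite_measure M by fact
  define A where "A = {x \<in> space M. f x < 0}"
  have A: "A \<in> sets M"
    unfolding A_def using borel_measurable_integrable[OF f] by measurable
  have int_neg: "integrable M (\<lambda>x. - f x * indicator A x)"
    using f A by (intro integrable_real_mult_indicator) auto
  have "(\<integral>x. \<bar>f x\<bar> \<partial>M) = (\<integral>x. f x + 2 * (- f x * indicator A x) \<partial>M)"
    by (intro Bochner_Integration.integral_cong) (auto simp: A_def indicator_def)
  also have "\<dots> = (\<integral>x. f x \<partial>M) + 2 * (\<integral>x. - f x * indicator A x \<partial>M)"
    using f int_neg by simp
  also have "\<dots> \<le> 2 * (\<integral>x. - f x * indicator A x \<partial>M)"
    using nonpos by simp
  also have "(\<integral>x. - f x * indicator A x \<partial>M) \<le> (\<integral>x. L * indicator A x \<partial>M)"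
  proof (rule integral_mono_AE[OF int_neg])
    show "integrable M (\<lambda>x. L * indicator A x)"
      using A by (intro integrable_real_mult_indicator) auto
    show "AE x in M. - f x * indicator A x \<le> L * indicator A x"
      using bound by eventually_elim (auto simp: indicator_def)
  qed
  also have "\<dots> = L * measure M A"
    using A by simp
  finally show ?thesis by (simp add: A_def)
qed

lemma infsum_abs_le_card_neg:
  fixes t :: "'a \<Rightarrow> real"
  assumes summable: "(\<lambda>m. \<bar>t m\<bar>) summable_on UNIV" and nonpos: "(\<Sum>\<^sub>\<infinity>m. t m) \<le> 0"
    and bound: "\<And>m. \<bar>t m\<bar> \<le> K" and fin: "finite {m. t m < 0}"
  shows "(\<Sum>\<^sub>\<infinity>m. \<bar>t m\<bar>) \<le> 2 * K * card {m. t m < 0}"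
proof -
  define u where "u m = \<bar>t m\<bar> - t m" for m
  have u_0: "u m = 0" if "m \<notin> {m. t m < 0}" for m using that by (simp add: u_def)
  have t: "t summable_on UNIV"
    by (rule abs_summable_summable) (use summable in simp)
  have u: "u summable_on UNIV"
  proof (rule summable_on_comparison_test)
    show "(\<lambda>m. 2 * \<bar>t m\<bar>) summable_on UNIV"
      using summable by (rule summable_on_cmult_right)
  qed (auto simp: u_def)
  have "(\<Sum>\<^sub>\<infinity>m. \<bar>t m\<bar>) = (\<Sum>\<^sub>\<infinity>m. t m) + (\<Sum>\<^sub>\<infinity>m. u m)"
    by (subst infsum_add[OF t u, symmetric]) (simp add: u_def)
  also have "\<dots> \<le> (\<Sum>m\<in>{m. t m < 0}. u m)"
    using nonpos fin by (subst infsum_cong_neutral[where T="{m. t m < 0}"]) (auto simp: u_0)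
  also have "\<dots> \<le> (\<Sum>m\<in>{m. t m < 0}. 2 * K)"
    using bound abs_ge_minus_self unfolding u_def by (smt (verit) sum_mono)
  finally show ?thesis by (simp add: mult.commute)
qed

lemma integral_abs_le_fourier_l1_measure_neg:
  fixes f :: "real^'n::finite \<Rightarrow> real"
  assumes f: "integrable haar_torus f"
    and summable: "(\<lambda>m. norm (fourier_coeff f m)) summable_on UNIV"
    and nonpos: "(\<integral>x. f x \<partial>haar_torus) \<le> 0"
  shows "(\<integral>x. \<bar>f x\<bar> \<partial>haar_torus)
    \<le> 2 * (\<Sum>\<^sub>\<infinity>m. norm (fourier_coeff f m)) * measure haar_torus {x \<in> torus_box. f x < 0}"
  using integral_abs_le_measure_neg[OF haar_torus.finite_measure_axioms f
      fourier_inversion_bound[OF f summable] nonpos] by simp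

lemma fourier_l1_le_integral_abs_card_neg:
  fixes f :: "real^'n::finite \<Rightarrow> real" and s :: real
  assumes s: "\<bar>s\<bar> = 1" and real_coeff: "\<forall>m. Im (fourier_coeff f m) = 0"
    and summable: "(\<lambda>m. norm (fourier_coeff f m)) summable_on UNIV"
    and nonpos: "(\<Sum>\<^sub>\<infinity>m. s * Re (fourier_coeff f m)) \<le> 0"
    and fin: "finite {m. s * Re (fourier_coeff f m) < 0}"
  shows "(\<Sum>\<^sub>\<infinity>m. norm (fourier_coeff f m))
    \<le> 2 * (\<integral>x. \<bar>f x\<bar> \<partial>haar_torus) * card {m. s * Re (fourier_coeff f m) < 0}"
proof -
  have "norm (fourier_coeff f m) = \<bar>s * Re (fourier_coeff f m)\<bar>" for m
    using s real_coeff by (simp add: cmod_eq_Re abs_mult)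
  then show ?thesis
    using summable nonpos fin norm_fourier_coeff_le[of f]
    by (simp add: infsum_abs_le_card_neg)
qed

theorem mainTheorem12:
  fixes f :: "real^'n \<Rightarrow> real" and s :: real
  assumes "s = 1 \<or> s = -1"
    and "integrable haar_torus f"
    and "\<not> (AE x in haar_torus. f x = 0)"
    and "\<forall>m. Im (fourier_coeff f m) = 0"
    and "(\<lambda>m. norm (fourier_coeff f m)) summable_on UNIV"
    and "(\<integral>x. f x \<partial>haar_torus) \<le> 0"
    and "(\<Sum>\<^sub>\<infinity>m. s * Re (fourier_coeff f m)) \<le> 0"
  shows "emeasure haar_torus {x \<in> torus_box. f x < 0}
           * emeasure (count_space UNIV) {m. s * Re (fourier_coeff f m) < 0} \<ge> 1/16"
proof -
  define N where "N = (\<integral>x. \<bar>f x\<bar> \<partial>haar_torus)"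
  define L where "L = (\<Sum>\<^sub>\<infinity>m. norm (fourier_coeff f m))"
  define lam where "lam = measure haar_torus {x \<in> torus_box. f x < 0}"
  define B where "B = {m. s * Re (fourier_coeff f m) < 0}"
  have "N > 0" unfolding N_def using assms(2,3) by (rule integral_abs_pos)
  have N_le: "N \<le> 2 * L * lam"
    unfolding N_def L_def lam_def using assms(2,5,6) by (rule integral_abs_le_fourier_l1_measure_neg)
  have L_le: "L \<le> 2 * N * card B" if "finite B"
    unfolding N_def L_def B_def using assms(1,4,5,7) that
    by (intro fourier_l1_le_integral_abs_card_neg) (auto simp: B_def)
  have "lam > 0" using N_le \<open>N > 0\<close> by (cases "lam = 0") (auto simp: lam_def order_less_le)
  then have emeasure_neg: "emeasure haar_torus {x \<in> torus_box. f x < 0} = ennreal lam"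
    by (simp add: lam_def haar_torus.emeasure_eq_measure)
  show ?thesis
  proof (cases "finite B")
    case True
    have "2 * L * lam \<le> 2 * (2 * N * card B) * lam"
      using L_le[OF True] \<open>lam > 0\<close> by (intro mult_right_mono) auto
    with N_le have "N * 1 \<le> N * (4 * lam * card B)" by (simp add: algebra_simps)
    then have "1 / 4 \<le> lam * card B" using \<open>N > 0\<close> by (simp add: mult_le_cancel_left_pos)
    then have "ennreal (1 / 16) \<le> ennreal lam * of_nat (card B)"
      using \<open>lam > 0\<close> by (simp add: ennreal_mult[symmetric] ennreal_of_nat_eq_real_of_nat ennreal_leI)
    then show ?thesis
      using True by (simp add: emeasure_neg B_def[symmetric] divide_ennreal[symmetric] ennreal_numeral)
  next
    case False
    then show ?thesis using \<open>lam > 0\<close> by (simp add: emeasure_neg B_def[symmetric] ennreal_mult_top)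
  qed
qed

end
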